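(* Let $r\ge 2$ and $k\ge 2$ be integers. For the hypergraphical clustering game with conflict-free seeking (CF) players on $r$-uniform hypergraphs: (1) if $k\ge r$, then $\left(\frac{k}{k-1}\right)^{r-1}\le PoA(\mathbb{H}_r,k)\le \frac{2k+r-2}{2k-r}$; (2) if $\frac r2<k<r$, then $\frac{k-1}{r}\left(\frac{k}{k-1}\right)^{r-1}\le PoA(\mathbb{H}_r,k)\le \frac{k-1}{r}\cdot\frac{2k+r-2}{2k-r}$; (3) if $k\le \frac r2$, then $PoA(\mathbb{H}_r,k)=\infty$.
   Context: A hypergraph $H=(V,\mathcal{E})$ consists of a finite nonempty set $V$ of vertices (players) and a finite set $\mathcal{E}$ of nonempty subsets of $V$ (hyperedges); we assume $\mathcal{E}\neq\emptyset$. $H$ is $r$-uniform if $|e|=r$ for all $e\in\mathcal{E}$; $\mathbb{H}_r$ denotes the family of $r$-uniform hypergraphs. A $k$-coloring is a map $c:V\to[k]=\{1,\dots,k\}$; $\mathcal{C}(k)$ is the set of all $k$-colorings; for $S\subseteq V$, $c(S)\subseteq[k]$ is the set of colors of vertices of $S$. $\mathcal{E}(v)=\{e\in\mathcal{E}: v\in e\}$. With CF players, the utility of $v$ is $u_v(c)=|\{e\in\mathcal{E}(v): |c(e)|=|c(e\setminus\{v\})|+1\}|$, i.e. the number of hyperedges containing $v$ in which the color of $v$ differs from the colors of all other vertices of the hyperedge. The social welfare is $SW(c)=\sum_{v\in V}u_v(c)$. A coloring $c$ is a (pure) Nash equilibrium if $u_v(c)\ge u_v(c_{-v},i)$ for all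 $v\in V$ and $i\in[k]$, where $(c_{-v},i)$ is $c$ with the color of $v$ replaced by $i$. $O(H,k)=\max_{c\in\mathcal{C}(k)}SW(c)$, $NE(H,k)=\min\{SW(c): c\in\mathcal{C}(k)\text{ a Nash equilibrium}\}$, and $PoA(\mathcal{H},k)=\sup_{H\in\mathcal{H}} O(H,k)/NE(H,k)$, with the convention $x/0=+\infty$ for $x>0$. *)

theory Defs
  imports "HOL-Library.Extended_Real" "HOL-Library.FuncSet" Complex_Main
begin

text \<open>Hypergraphs: vertices are natural numbers (every finite hypergraph is
isomorphic to one on nat). A hypergraph is a pair (V, E).\<close>

definition hypergraph :: "nat set \<Rightarrow> nat set set \<Rightarrow> bool" where
  "hypergraph V E \<longleftrightarrow> finite V \<and> V \<noteq> {} \<and> E \<noteq> {} \<and>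
     (\<forall>e\<in>E. e \<noteq> {} \<and> e \<subseteq> V)"

definition uniform_hypergraphs :: "nat \<Rightarrow> (nat set \<times> nat set set) set" where
  "uniform_hypergraphs r = {(V, E). hypergraph V E \<and> (\<forall>e\<in>E. card e = r)}"

definition colorings :: "nat set \<Rightarrow> nat \<Rightarrow> (nat \<Rightarrow> nat) set" where
  "colorings V k = V \<rightarrow>\<^sub>E {1..k}"

definition util :: "nat set set \<Rightarrow> nat \<Rightarrow> (nat \<Rightarrow> nat) \<Rightarrow> nat" where
  "util E v c = card {e \<in> E. v \<in> e \<and> card (c ` e) = card (c ` (e - {v})) + 1}"

definition SW :: "nat set \<Rightarrow> nat set set \<Rightarrow> (nat \<Rightarrow> nat) \<Rightarrow> nat" where
  "SW V E c = (\<Sum>v\<in>V. util E v c)"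

definition nash_eq :: "nat set \<Rightarrow> nat set set \<Rightarrow> nat \<Rightarrow> (nat \<Rightarrow> nat) \<Rightarrow> bool" where
  "nash_eq V E k c \<longleftrightarrow> c \<in> colorings V k \<and>
     (\<forall>v\<in>V. \<forall>i\<in>{1..k}. util E v (c(v := i)) \<le> util E v c)"

definition OPT :: "nat set \<Rightarrow> nat set set \<Rightarrow> nat \<Rightarrow> nat" where
  "OPT V E k = Max (SW V E ` colorings V k)"

text \<open>Worst Nash equilibrium welfare (as an extended real; the infimum over an
empty set would be +\<infinity>).\<close>
definition NEW :: "nat set \<Rightarrow> nat set set \<Rightarrow> nat \<Rightarrow> ereal" where
  "NEW V E k = (INF c \<in> {c. nash_eq V E k c}. ereal (real (SW V E c)))"

definition ratio :: "nat set \<Rightarrow> nat set set \<Rightarrow> nat \<Rightarrow> ereal" where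
  "ratio V E k = (if NEW V E k = 0 then (if OPT V E k > 0 then \<infinity> else 0)
                  else ereal (real (OPT V E k)) / NEW V E k)"

definition PoA :: "nat \<Rightarrow> nat \<Rightarrow> ereal" where
  "PoA r k = (SUP H \<in> uniform_hypergraphs r. ratio (fst H) (snd H) k)"

end

theory Submission
  imports Defs
begin

text \<open>
  Summing utilities edge by edge, the welfare counts the vertices whose colour is unique in
  their edge; an edge of size \<open>r\<close> has at most \<open>r\<close> of them, and at most \<open>k - 1\<close> if \<open>r > k\<close>.
  At a Nash equilibrium no vertex gains by switching to any of the \<open>k\<close> colours; averaging
  over all \<open>k\<close> deviations, \<open>k\<close> times the utility of \<open>v\<close> is at least the sum of
  \<open>k - |c(e - {v})|\<close> over the edges \<open>e\<close> containing \<open>v\<close>. Summed over the vertices of an edge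
  these terms give \<open>rk - r|c(e)| + s(e)\<close>, where \<open>s(e)\<close> counts the unique vertices, and since
  every other colour occurs at least twice, \<open>2|c(e)| \<le> r + s(e)\<close>. Hence
  \<open>(2k + r - 2) SW \<ge> r (2k - r) |E|\<close> at every equilibrium.

  The lower bounds come from the complete \<open>r\<close>-partite hypergraph with parts of size \<open>k\<close>:
  colouring each vertex by its position inside its part is an equilibrium in which every vertex
  gets \<open>(k - 1)^(r - 1)\<close>, while colouring whole parts by distinct colours gives \<open>k^(r - 1)\<close> to
  every vertex of \<open>r\<close> parts (of \<open>k - 1\<close> parts if \<open>r > k\<close>). If \<open>2k \<le> r\<close>, a single edge
  coloured cyclically shows every colour twice, so it is an equilibrium of welfare 0.
\<close>

section \<open>Welfare as a count of uniquely coloured vertices\<close>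

definition unique_vertices :: "(nat \<Rightarrow> nat) \<Rightarrow> nat set \<Rightarrow> nat set" where
  "unique_vertices c e = {v \<in> e. c v \<notin> c ` (e - {v})}"

lemma card_image_eq_Suc_iff:
  assumes "finite e" "v \<in> e"
  shows "card (c ` e) = card (c ` (e - {v})) + 1 \<longleftrightarrow> c v \<notin> c ` (e - {v})"
proof -
  have "c ` e = insert (c v) (c ` (e - {v}))" using assms(2) by blast
  then show ?thesis using assms(1) by (simp add: card_insert_if)
qed

lemma util_eq_card_unique:
  assumes "\<forall>e\<in>E. finite e"
  shows "util E v c = card {e \<in> E. v \<in> e \<and> c v \<notin> c ` (e - {v})}"
  unfolding util_def using card_image_eq_Suc_iff assms by (metis (no_types, lifting))

lemma util_fun_upd:
  assumes "\<forall>e\<in>E. finite e"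
  shows "util E v (c(v := i)) = card {e \<in> E. v \<in> e \<and> i \<notin> c ` (e - {v})}"
proof -
  have "\<And>e. (c(v := i)) ` (e - {v}) = c ` (e - {v})" by auto
  then show ?thesis using util_eq_card_unique[OF assms, of v "c(v := i)"] by simp
qed

lemma hypergraphD:
  assumes "hypergraph V E"
  shows "finite V" "finite E" "\<forall>e\<in>E. finite e" "\<forall>e\<in>E. e \<subseteq> V"
  using assms finite_subset[of E "Pow V"] finite_subset[of _ V]
  unfolding hypergraph_def by auto

lemma card_filter_sum_swap:
  assumes "finite A" "finite B"
  shows "(\<Sum>a\<in>A. card {b \<in> B. P a b}) = (\<Sum>b\<in>B. card {a \<in> A. P a b})"
  using sum.swap_restrict[OF assms, of "\<lambda>_ _. 1::nat" P] by simp

lemma SW_eq_sum_unique: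
  assumes "hypergraph V E"
  shows "SW V E c = (\<Sum>e\<in>E. card (unique_vertices c e))"
proof -
  note H = hypergraphD[OF assms]
  have "SW V E c = (\<Sum>v\<in>V. card {e \<in> E. v \<in> e \<and> c v \<notin> c ` (e - {v})})"
    unfolding SW_def using util_eq_card_unique[OF H(3)] by simp
  also have "\<dots> = (\<Sum>e\<in>E. card {v \<in> V. v \<in> e \<and> c v \<notin> c ` (e - {v})})"
    by (rule card_filter_sum_swap[OF H(1,2)])
  also have "\<dots> = (\<Sum>e\<in>E. card (unique_vertices c e))"
    unfolding unique_vertices_def using H(4) by (intro sum.cong) (auto intro: arg_cong[where f = card])
  finally show ?thesis .
qed

lemma sum_card_image_remove:
  assumes "finite e"
  shows "(\<Sum>v\<in>e. card (c ` (e - {v}))) + card (unique_vertices c e) = card e * card (c ` e)"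
proof -
  have "card (c ` (e - {v})) + (if c v \<notin> c ` (e - {v}) then 1 else 0) = card (c ` e)"
    if v: "v \<in> e" for v
  proof (cases "c v \<in> c ` (e - {v})")
    case True
    then have "c ` e = c ` (e - {v})" using v by blast
    then show ?thesis using True by simp
  next
    case False
    then show ?thesis using card_image_eq_Suc_iff[OF assms v, of c] by simp
  qed
  then have "(\<Sum>v\<in>e. card (c ` (e - {v})) + (if c v \<notin> c ` (e - {v}) then 1 else 0))
      = card e * card (c ` e)" by simp
  moreover have "(\<Sum>v\<in>e. if c v \<notin> c ` (e - {v}) then 1 else 0) = card (unique_vertices c e)"
    using sum.inter_filter[OF assms, of "\<lambda>_. 1::nat"] by (simp add: unique_vertices_def)
  ultimately show ?thesis by (simp add: sum.distrib)
qed

lemma double_card_image_le: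
  assumes "finite W" and "\<And>w. w \<in> W \<Longrightarrow> \<exists>w'\<in>W. w' \<noteq> w \<and> c w' = c w"
  shows "2 * card (c ` W) \<le> card W"
proof -
  have "card W = (\<Sum>y\<in>c ` W. card {w \<in> W. c w = y})"
    using sum.image_gen[OF assms(1), of "\<lambda>_. 1::nat" c] by simp
  moreover have "2 \<le> card {w \<in> W. c w = y}" if "y \<in> c ` W" for y
  proof -
    obtain w where w: "w \<in> W" "c w = y" using \<open>y \<in> c ` W\<close> by blast
    then obtain w' where w': "w' \<in> W" "w' \<noteq> w" "c w' = y" using assms(2) by metis
    have "card {w, w'} \<le> card {w \<in> W. c w = y}"
      using w w' assms(1) by (intro card_mono) auto
    then show ?thesis using w'(2) by simp
  qed
  ultimately show ?thesis using sum_bounded_below[of "c ` W" 2 "\<lambda>y. card {w \<in> W. c w = y}"]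
    by (simp add: mult.commute)
qed
lemma unique_vertices_subset: "unique_vertices c e \<subseteq> e"
  unfolding unique_vertices_def by auto

lemma inj_on_unique_vertices: "inj_on c (unique_vertices c e)"
  unfolding unique_vertices_def inj_on_def by auto

lemma shared_color_not_unique:
  assumes "w \<in> e" "u \<in> e" "w \<noteq> u" "c w = c u"
  shows "u \<notin> unique_vertices c e"
proof -
  have "c u \<in> c ` (e - {u})" using assms by (metis Diff_iff empty_iff image_eqI insert_iff)
  then show ?thesis unfolding unique_vertices_def by simp
qed

lemma double_card_image_le_card_unique:
  assumes "finite e"
  shows "2 * card (c ` e) \<le> card e + card (unique_vertices c e)"
proof -
  define U where "U = unique_vertices c e"
  define W where "W = e - U"
  have "U \<subseteq> e" unfolding U_def by (rule unique_vertices_subset)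
  then have e: "e = U \<union> W" "U \<inter> W = {}" and fin: "finite U" "finite W"
    using assms finite_subset unfolding W_def by auto
  have "\<exists>w'\<in>W. w' \<noteq> w \<and> c w' = c w" if "w \<in> W" for w
  proof -
    have "c w \<in> c ` (e - {w})" using \<open>w \<in> W\<close> unfolding W_def U_def unique_vertices_def by blast
    then obtain w' where "w' \<in> e" "w' \<noteq> w" "c w' = c w" by (metis DiffE imageE singletonI)
    then show ?thesis
      using shared_color_not_unique[of w e w' c] \<open>w \<in> W\<close> unfolding W_def U_def by auto
  qed
  then have W: "2 * card (c ` W) \<le> card W" by (rule double_card_image_le[OF fin(2)])
  have "card (c ` e) \<le> card (c ` U) + card (c ` W)"
    unfolding e(1) image_Un by (rule card_Un_le)
  also have "\<dots> \<le> card U + card (c ` W)" using card_image_le[OF fin(1)] by simp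
  finally show ?thesis
    using W card_Un_disjoint[OF fin e(2)] unfolding U_def[symmetric] e(1)[symmetric] by simp
qed

definition max_unique :: "nat \<Rightarrow> nat \<Rightarrow> nat" where
  "max_unique r k = (if r \<le> k then r else k - 1)"

lemma card_unique_le_max_unique:
  assumes "finite e" and colors: "c ` e \<subseteq> {1..k}"
  shows "card (unique_vertices c e) \<le> max_unique (card e) k"
proof -
  define U where "U = unique_vertices c e"
  have "U \<subseteq> e" unfolding U_def by (rule unique_vertices_subset)
  then have Ue: "card U \<le> card e" and fin: "finite U"
    using assms(1) by (auto intro: card_mono finite_subset)
  have cU: "card (c ` U) = card U"
    unfolding U_def by (rule card_image[OF inj_on_unique_vertices])
  show ?thesis
  proof (cases "U = e")
    case True
    have "card (c ` e) \<le> k" using card_mono[OF _ colors] by simp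
    then have "card e \<le> k" using True cU by simp
    then show ?thesis using Ue unfolding max_unique_def U_def by simp
  next
    case False
    then obtain w where w: "w \<in> e" "w \<notin> U" using \<open>U \<subseteq> e\<close> by blast
    have "c w \<noteq> c u" if "u \<in> U" for u
      using w that shared_color_not_unique[of w e u c] \<open>U \<subseteq> e\<close> unfolding U_def by blast
    then have "c w \<notin> c ` U" by blast
    then have "card (insert (c w) (c ` U)) = card U + 1" using cU fin by simp
    moreover have "insert (c w) (c ` U) \<subseteq> {1..k}" using colors w \<open>U \<subseteq> e\<close> by blast
    ultimately have "card U + 1 \<le> k" using card_mono[of "{1..k}" "insert (c w) (c ` U)"] by simp
    then show ?thesis using Ue unfolding max_unique_def U_def by auto
  qed
qed

section \<open>Welfare at Nash equilibria\<close>

lemma colorings_range: "c \<in> colorings V k \<Longrightarrow> S \<subseteq> V \<Longrightarrow> c ` S \<subseteq> {1..k}"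
  unfolding colorings_def by auto

lemma sum_util_fun_upd:
  assumes "finite E" "\<forall>e\<in>E. finite e" and colors: "\<And>e. e \<in> E \<Longrightarrow> c ` (e - {v}) \<subseteq> {1..k}"
  shows "(\<Sum>i\<in>{1..k}. util E v (c(v := i))) = (\<Sum>e\<in>{e \<in> E. v \<in> e}. k - card (c ` (e - {v})))"
proof -
  have "(\<Sum>i\<in>{1..k}. util E v (c(v := i)))
      = (\<Sum>i\<in>{1..k}. card {e \<in> {e \<in> E. v \<in> e}. i \<notin> c ` (e - {v})})"
    using util_fun_upd[OF assms(2)] by (simp add: conj_assoc)
  also have "\<dots> = (\<Sum>e\<in>{e \<in> E. v \<in> e}. card {i \<in> {1..k}. i \<notin> c ` (e - {v})})"
    by (rule card_filter_sum_swap) (use assms(1) in auto)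
  also have "\<dots> = (\<Sum>e\<in>{e \<in> E. v \<in> e}. k - card (c ` (e - {v})))"
  proof (rule sum.cong[OF refl])
    fix e assume "e \<in> {e \<in> E. v \<in> e}"
    then have "{i \<in> {1..k}. i \<notin> c ` (e - {v})} = {1..k} - c ` (e - {v})"
      and "finite (c ` (e - {v}))" "c ` (e - {v}) \<subseteq> {1..k}" using assms by auto
    then show "card {i \<in> {1..k}. i \<notin> c ` (e - {v})} = k - card (c ` (e - {v}))"
      by (simp add: card_Diff_subset)
  qed
  finally show ?thesis .
qed

lemma nash_eq_deviation_bound:
  assumes H: "hypergraph V E" and NE: "nash_eq V E k c" and v: "v \<in> V"
  shows "(\<Sum>e\<in>{e \<in> E. v \<in> e}. k - card (c ` (e - {v}))) \<le> k * util E v c"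
proof -
  note fin = hypergraphD[OF H]
  have c: "c \<in> colorings V k" and dev: "\<And>i. i \<in> {1..k} \<Longrightarrow> util E v (c(v := i)) \<le> util E v c"
    using NE v unfolding nash_eq_def by auto
  have "c ` (e - {v}) \<subseteq> {1..k}" if "e \<in> E" for e
    using colorings_range[OF c] fin(4) that by blast
  then have "(\<Sum>e\<in>{e \<in> E. v \<in> e}. k - card (c ` (e - {v}))) = (\<Sum>i\<in>{1..k}. util E v (c(v := i)))"
    using sum_util_fun_upd[OF fin(2,3)] by simp
  also have "\<dots> \<le> (\<Sum>i\<in>{1..k}. util E v c)"
    using dev by (rule sum_mono)
  finally show ?thesis by simp
qed

lemma edge_deviation_bound:
  assumes "finite e" and colors: "c ` e \<subseteq> {1..k}"
  defines "r \<equiv> card e" and "s \<equiv> card (unique_vertices c e)"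
  shows "real r * (2 * real k - real r)
           \<le> 2 * real (\<Sum>v\<in>e. k - card (c ` (e - {v}))) + (real r - 2) * real s"
proof -
  define T where "T = (\<Sum>v\<in>e. k - card (c ` (e - {v})))"
  have "card (c ` (e - {v})) \<le> card {1..k}" for v
    by (rule card_mono) (use colors in auto)
  then have "T + (\<Sum>v\<in>e. card (c ` (e - {v}))) = r * k"
    unfolding T_def r_def by (simp flip: sum.distrib)
  then have "T + r * card (c ` e) = r * k + s"
    using sum_card_image_remove[OF assms(1), of c] unfolding r_def s_def by simp
  then have "real T = real r * real k + real s - real r * real (card (c ` e))"
    by (simp flip: of_nat_add of_nat_mult add: eq_diff_eq)
  moreover have "real r * (2 * real (card (c ` e))) \<le> real r * (real r + real s)"
    using double_card_image_le_card_unique[OF assms(1), of c] unfolding r_def s_def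
    by (intro mult_left_mono) linarith+
  ultimately show ?thesis
    unfolding T_def[symmetric] by (simp add: algebra_simps)
qed

lemma nash_eq_SW_lower:
  assumes H: "hypergraph V E" and uniform: "\<forall>e\<in>E. card e = r" and NE: "nash_eq V E k c"
  shows "real r * (2 * real k - real r) * real (card E) \<le> (2 * real k + real r - 2) * real (SW V E c)"
proof -
  note fin = hypergraphD[OF H]
  define D where "D e = (\<Sum>v\<in>e. k - card (c ` (e - {v})))" for e
  have "(\<Sum>e\<in>E. D e) = (\<Sum>v\<in>V. \<Sum>e\<in>{e \<in> E. v \<in> e}. k - card (c ` (e - {v})))"
    unfolding D_def using fin(4)
      sum.swap_restrict[OF fin(1,2), of "\<lambda>v e. k - card (c ` (e - {v}))" "\<lambda>v e. v \<in> e"]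
    by (simp add: Int_absorb1 Collect_conj_eq Collect_mem_eq)
  also have "\<dots> \<le> (\<Sum>v\<in>V. k * util E v c)"
    by (rule sum_mono) (rule nash_eq_deviation_bound[OF H NE])
  also have "\<dots> = k * SW V E c" unfolding SW_def by (simp add: sum_distrib_left)
  finally have "real (\<Sum>e\<in>E. D e) \<le> real k * real (SW V E c)"
    by (metis of_nat_le_iff of_nat_mult)
  moreover have "c ` e \<subseteq> {1..k}" if "e \<in> E" for e
    using NE fin(4) that unfolding nash_eq_def by (meson colorings_range)
  then have "(\<Sum>e\<in>E. real r * (2 * real k - real r))
      \<le> (\<Sum>e\<in>E. 2 * real (D e) + (real r - 2) * real (card (unique_vertices c e)))"
    using edge_deviation_bound fin(3) uniform unfolding D_def by (intro sum_mono) metis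
  then have "real r * (2 * real k - real r) * real (card E)
      \<le> 2 * real (\<Sum>e\<in>E. D e) + (real r - 2) * real (SW V E c)"
    unfolding SW_eq_sum_unique[OF H] by (simp add: sum.distrib sum_distrib_left mult.commute)
  ultimately show ?thesis by (simp add: algebra_simps)
qed

section \<open>The upper bound\<close>

lemma finite_colorings: "finite V \<Longrightarrow> finite (colorings V k)"
  unfolding colorings_def by (simp add: finite_PiE)

lemma SW_le_OPT:
  assumes "finite V" "c \<in> colorings V k"
  shows "SW V E c \<le> OPT V E k"
  unfolding OPT_def using finite_colorings[OF assms(1)] assms(2) by (intro Max_ge) auto

lemma OPT_le_max_unique:
  assumes H: "hypergraph V E" and uniform: "\<forall>e\<in>E. card e = r" and "k \<ge> 1"
  shows "OPT V E k \<le> card E * max_unique r k"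
proof -
  note fin = hypergraphD[OF H]
  have "SW V E c \<le> card E * max_unique r k" if c: "c \<in> colorings V k" for c
  proof -
    have "card (unique_vertices c e) \<le> max_unique r k" if "e \<in> E" for e
      using card_unique_le_max_unique[OF _ colorings_range[OF c]] fin uniform that by metis
    then show ?thesis
      unfolding SW_eq_sum_unique[OF H] using sum_bounded_above[of E _ "max_unique r k"] by simp
  qed
  moreover have "restrict (\<lambda>_. 1) V \<in> colorings V k"
    unfolding colorings_def using \<open>k \<ge> 1\<close> by auto
  ultimately show ?thesis
    unfolding OPT_def using finite_colorings[OF fin(1)] by (subst Max_le_iff) auto
qed

lemma NEW_le_SW: "nash_eq V E k c \<Longrightarrow> NEW V E k \<le> ereal (real (SW V E c))"
  unfolding NEW_def by (rule INF_lower) simp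

lemma NEW_nonneg: "0 \<le> NEW V E k"
  unfolding NEW_def by (rule INF_greatest) simp

lemma ratio_le:
  assumes "0 < L" and NE_bound: "\<And>c. nash_eq V E k c \<Longrightarrow> L \<le> real (SW V E c)"
    and OPT_bound: "real (OPT V E k) \<le> U"
  shows "ratio V E k \<le> ereal (U / L)"
proof -
  have NEL: "ereal L \<le> NEW V E k"
    unfolding NEW_def using NE_bound by (intro INF_greatest) simp
  then have "NEW V E k \<noteq> 0" using \<open>0 < L\<close> by (auto simp: zero_ereal_def)
  moreover have "ereal (real (OPT V E k)) / NEW V E k \<le> ereal (U / L)"
  proof (cases "NEW V E k")
    case (real y)
    then have "real (OPT V E k) / y \<le> U / L"
      using NEL OPT_bound \<open>0 < L\<close> by (auto intro: frac_le)
    then show ?thesis using real NEL \<open>0 < L\<close> by simp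
  qed (use NEL OPT_bound \<open>0 < L\<close> in auto)
  ultimately show ?thesis unfolding ratio_def by simp
qed

lemma ratio_ge:
  assumes "finite V" and NE: "nash_eq V E k c" and c': "c' \<in> colorings V k"
  shows "ereal (real (SW V E c') / real (SW V E c)) \<le> ratio V E k"
proof -
  have OPT: "SW V E c' \<le> OPT V E k" by (rule SW_le_OPT[OF assms(1) c'])
  show ?thesis
  proof (cases "NEW V E k = 0")
    case True
    then show ?thesis using OPT unfolding ratio_def by auto
  next
    case False
    then obtain y where y: "NEW V E k = ereal y" "0 < y" "y \<le> real (SW V E c)"
      using NEW_nonneg[of V E k] NEW_le_SW[OF NE] by (cases "NEW V E k") auto
    have "real (SW V E c') / real (SW V E c) \<le> real (OPT V E k) / y"
      using OPT y by (auto intro: frac_le)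
    then show ?thesis unfolding ratio_def using False y by simp
  qed
qed

lemma ratio_le_PoA: "(V, E) \<in> uniform_hypergraphs r \<Longrightarrow> ratio V E k \<le> PoA r k"
  unfolding PoA_def by (rule SUP_upper2[where i = "(V, E)"]) auto

lemma PoA_le:
  assumes "r \<ge> 1" "k \<ge> 1" "real r < 2 * real k"
  shows "PoA r k \<le> ereal (real (max_unique r k) / real r * ((2 * real k + real r - 2) / (2 * real k - real r)))"
  unfolding PoA_def
proof (rule SUP_least, clarify)
  fix V E assume "(V, E) \<in> uniform_hypergraphs r"
  then have H: "hypergraph V E" and uniform: "\<forall>e\<in>E. card e = r"
    unfolding uniform_hypergraphs_def by auto
  define L where "L = real r * (2 * real k - real r) * real (card E) / (2 * real k + real r - 2)"
  have "card E > 0" using H hypergraphD(2)[OF H] unfolding hypergraph_def by auto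
  then have "0 < L" unfolding L_def using assms by simp
  moreover have "L \<le> real (SW V E c)" if "nash_eq V E k c" for c
    using nash_eq_SW_lower[OF H uniform that] assms unfolding L_def by (simp add: divide_le_eq mult.commute)
  moreover have "real (OPT V E k) \<le> real (card E) * real (max_unique r k)"
    using OPT_le_max_unique[OF H uniform \<open>k \<ge> 1\<close>] by (metis of_nat_le_iff of_nat_mult)
  ultimately have "ratio V E k \<le> ereal (real (card E) * real (max_unique r k) / L)"
    by (rule ratio_le)
  also have "real (card E) * real (max_unique r k) / L
      = real (max_unique r k) / real r * ((2 * real k + real r - 2) / (2 * real k - real r))"
    unfolding L_def using \<open>card E > 0\<close> assms by (simp add: field_simps)
  finally show "ratio (fst (V, E)) (snd (V, E)) k \<le> \<dots>" by simp
qed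

section \<open>The complete \<open>r\<close>-partite hypergraph\<close>

lemma card_PiE_fixed_point:
  assumes "finite I" "i \<in> I" "a \<in> A i"
  shows "card {f \<in> Pi\<^sub>E I A. f i = a \<and> (\<forall>j\<in>I - {i}. P j (f j))}
       = (\<Prod>j\<in>I - {i}. card {b \<in> A j. P j b})"
proof -
  have "{f \<in> Pi\<^sub>E I A. f i = a \<and> (\<forall>j\<in>I - {i}. P j (f j))}
      = Pi\<^sub>E I (\<lambda>j. if j = i then {a} else {b \<in> A j. P j b})"
    using assms(2,3) by (auto simp: PiE_iff extensional_def split: if_splits)
  then have "card {f \<in> Pi\<^sub>E I A. f i = a \<and> (\<forall>j\<in>I - {i}. P j (f j))}
      = (\<Prod>j\<in>I. card (if j = i then {a} else {b \<in> A j. P j b}))"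
    using assms(1) by (simp add: card_PiE)
  also have "\<dots> = (\<Prod>j\<in>I - {i}. card (if j = i then {a} else {b \<in> A j. P j b}))"
    using assms(1,2) by (simp add: prod.remove[of I i])
  also have "\<dots> = (\<Prod>j\<in>I - {i}. card {b \<in> A j. P j b})"
    by (rule prod.cong) auto
  finally show ?thesis .
qed

text \<open>
  Vertex \<open>i * k + a\<close> (with \<open>a < k\<close>) is the \<open>a\<close>-th vertex of part \<open>i\<close>; an edge picks one vertex
  \<open>f i\<close> from each of the \<open>r\<close> parts.
\<close>

definition transversal :: "nat \<Rightarrow> nat \<Rightarrow> (nat \<Rightarrow> nat) \<Rightarrow> nat set" where
  "transversal r k f = (\<lambda>i. i * k + f i) ` {..<r}"

definition transversal_edges :: "nat \<Rightarrow> nat \<Rightarrow> nat set set" where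
  "transversal_edges r k = transversal r k ` ({..<r} \<rightarrow>\<^sub>E {..<k})"

lemma mem_transversal:
  assumes "f \<in> {..<r} \<rightarrow>\<^sub>E {..<k}"
  shows "v \<in> transversal r k f \<longleftrightarrow> v div k < r \<and> f (v div k) = v mod k"
proof
  assume "v \<in> transversal r k f"
  then obtain i where "i < r" "v = i * k + f i" "f i < k"
    using assms unfolding transversal_def by auto
  then show "v div k < r \<and> f (v div k) = v mod k" by simp
next
  assume "v div k < r \<and> f (v div k) = v mod k"
  then show "v \<in> transversal r k f"
    unfolding transversal_def by (intro image_eqI[where x = "v div k"]) simp_all
qed

lemma inj_on_transversal_index:
  fixes f :: "nat \<Rightarrow> nat"
  assumes "f \<in> {..<r} \<rightarrow>\<^sub>E {..<k}"
  shows "inj_on (\<lambda>i. i * k + f i) {..<r}"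
proof (rule inj_onI)
  fix i j assume ij: "i \<in> {..<r}" "j \<in> {..<r}" and eq: "i * k + f i = j * k + f j"
  have "f i < k" "f j < k" using assms ij by auto
  then have "i = (i * k + f i) div k" "j = (j * k + f j) div k" by simp_all
  then show "i = j" using eq by simp
qed

lemma card_transversal: "f \<in> {..<r} \<rightarrow>\<^sub>E {..<k} \<Longrightarrow> card (transversal r k f) = r"
  unfolding transversal_def by (simp add: card_image inj_on_transversal_index)

lemma transversal_subset:
  assumes "f \<in> {..<r} \<rightarrow>\<^sub>E {..<k}"
  shows "transversal r k f \<subseteq> {..<r * k}"
proof
  fix v assume "v \<in> transversal r k f"
  then obtain i where "i < r" "v = i * k + f i" "f i < k"
    using assms unfolding transversal_def by auto
  then have "v < (i + 1) * k" by simp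
  also have "\<dots> \<le> r * k" using \<open>i < r\<close> by (intro mult_right_mono) auto
  finally show "v \<in> {..<r * k}" by simp
qed

lemma inj_on_transversal: "inj_on (transversal r k) ({..<r} \<rightarrow>\<^sub>E {..<k})"
proof (rule inj_onI)
  fix f g assume f: "f \<in> {..<r} \<rightarrow>\<^sub>E {..<k}" and g: "g \<in> {..<r} \<rightarrow>\<^sub>E {..<k}"
    and eq: "transversal r k f = transversal r k g"
  show "f = g"
  proof (rule PiE_ext[OF f g])
    fix i assume i: "i \<in> {..<r}"
    then have "f i < k" using f by auto
    moreover have "i * k + f i \<in> transversal r k g"
      using i eq unfolding transversal_def by auto
    ultimately show "f i = g i" using mem_transversal[OF g, of "i * k + f i"] by simp
  qed
qed

lemma transversal_edges_uniform:
  assumes "r \<ge> 1" "k \<ge> 1"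
  shows "({..<r * k}, transversal_edges r k) \<in> uniform_hypergraphs r"
proof -
  have "restrict (\<lambda>_. 0) {..<r} \<in> {..<r} \<rightarrow>\<^sub>E {..<k}" using assms by auto
  then have "transversal_edges r k \<noteq> {}" unfolding transversal_edges_def by blast
  moreover have "{..<r * k} \<noteq> {}" using assms by (simp add: lessThan_empty_iff)
  moreover have "e \<noteq> {} \<and> e \<subseteq> {..<r * k} \<and> card e = r" if e: "e \<in> transversal_edges r k" for e
  proof -
    obtain f where "f \<in> {..<r} \<rightarrow>\<^sub>E {..<k}" "e = transversal r k f"
      using e unfolding transversal_edges_def by blast
    moreover from this have "card e = r" by (simp add: card_transversal)
    ultimately show ?thesis using transversal_subset assms by auto
  qed
  ultimately show ?thesis unfolding uniform_hypergraphs_def hypergraph_def by simp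
qed

lemma transversal_remove:
  assumes "f \<in> {..<r} \<rightarrow>\<^sub>E {..<k}" "i < r"
  shows "transversal r k f - {i * k + f i} = (\<lambda>j. j * k + f j) ` ({..<r} - {i})"
  unfolding transversal_def using assms
  by (subst inj_on_image_set_diff[OF inj_on_transversal_index[OF assms(1)]]) auto

lemma util_transversal_edges:
  assumes "v < r * k"
  shows "util (transversal_edges r k) v c
       = (\<Prod>j\<in>{..<r} - {v div k}. card {b \<in> {..<k}. c (j * k + b) \<noteq> c v})"
proof -
  define i a where "i = v div k" and "a = v mod k"
  have "k > 0" using assms by (cases k) auto
  then have i: "i < r" and a: "a < k" and v: "v = i * k + a"
    using assms unfolding i_def a_def by (simp_all add: less_mult_imp_div_less)
  define P where "P e \<longleftrightarrow> v \<in> e \<and> c v \<notin> c ` (e - {v})" for e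
  have P_iff: "P (transversal r k f) \<longleftrightarrow> f i = a \<and> (\<forall>j\<in>{..<r} - {i}. c (j * k + f j) \<noteq> c v)"
    if f: "f \<in> {..<r} \<rightarrow>\<^sub>E {..<k}" for f
  proof (cases "f i = a")
    case True
    then have "c ` (transversal r k f - {v}) = (\<lambda>j. c (j * k + f j)) ` ({..<r} - {i})"
      using transversal_remove[OF f i] v by (simp add: image_image)
    moreover have "v \<in> transversal r k f" using mem_transversal[OF f] True i unfolding i_def a_def by simp
    ultimately show ?thesis unfolding P_def using True by (auto simp: image_iff) (metis Diff_iff lessThan_iff singletonD)
  next
    case False
    then show ?thesis using mem_transversal[OF f] unfolding P_def i_def a_def by simp
  qed
  have "\<forall>e\<in>transversal_edges r k. finite e"
    unfolding transversal_edges_def transversal_def by auto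
  then have "util (transversal_edges r k) v c = card {e \<in> transversal_edges r k. P e}"
    unfolding P_def by (rule util_eq_card_unique)
  also have "{e \<in> transversal_edges r k. P e}
      = transversal r k ` {f \<in> {..<r} \<rightarrow>\<^sub>E {..<k}. P (transversal r k f)}"
    unfolding transversal_edges_def by blast
  also have "card \<dots> = card {f \<in> {..<r} \<rightarrow>\<^sub>E {..<k}. P (transversal r k f)}"
    by (rule card_image, rule inj_on_subset[OF inj_on_transversal]) blast
  also have "{f \<in> {..<r} \<rightarrow>\<^sub>E {..<k}. P (transversal r k f)}
      = {f \<in> {..<r} \<rightarrow>\<^sub>E {..<k}. f i = a \<and> (\<forall>j\<in>{..<r} - {i}. c (j * k + f j) \<noteq> c v)}"
    using P_iff by blast
  also have "card \<dots> = (\<Prod>j\<in>{..<r} - {i}. card {b \<in> {..<k}. c (j * k + b) \<noteq> c v})"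
    using i a by (intro card_PiE_fixed_point) auto
  finally show ?thesis unfolding i_def .
qed

definition mod_coloring :: "nat set \<Rightarrow> nat \<Rightarrow> nat \<Rightarrow> nat" where
  "mod_coloring V k = restrict (\<lambda>v. v mod k + 1) V"

definition part_coloring :: "nat \<Rightarrow> nat \<Rightarrow> nat \<Rightarrow> nat" where
  "part_coloring r k = restrict (\<lambda>v. min (v div k + 1) k) {..<r * k}"

lemma mod_coloring_in_colorings: "k \<ge> 1 \<Longrightarrow> mod_coloring V k \<in> colorings V k"
  unfolding mod_coloring_def colorings_def by (auto simp: Suc_le_eq)

lemma part_coloring_in_colorings: "k \<ge> 1 \<Longrightarrow> part_coloring r k \<in> colorings {..<r * k} k"
  unfolding part_coloring_def colorings_def by auto

lemma transversal_vertex_other_part: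
  fixes v r k j b :: nat
  assumes "v < r * k" "j < r" "j \<noteq> v div k" "b < k"
  shows "j * k + b < r * k" "j * k + b \<noteq> v" "(j * k + b) div k = j"
proof -
  have "j * k + b < (j + 1) * k" using assms(4) by simp
  also have "\<dots> \<le> r * k" using assms(2) by (intro mult_right_mono) auto
  finally show "j * k + b < r * k" .
  show "(j * k + b) div k = j" using assms(4) by simp
  then show "j * k + b \<noteq> v" using assms(3) by auto
qed

lemma util_mod_coloring_fun_upd:
  assumes v: "v < r * k" and b: "b \<in> {1..k}"
  shows "util (transversal_edges r k) v ((mod_coloring {..<r * k} k)(v := b)) = (k - 1) ^ (r - 1)"
proof -
  let ?c = "(mod_coloring {..<r * k} k)(v := b)"
  have "v div k < r" using v by (simp add: less_mult_imp_div_less)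
  have "{b' \<in> {..<k}. ?c (j * k + b') \<noteq> ?c v} = {..<k} - {b - 1}"
    if "j \<in> {..<r} - {v div k}" for j
    using that b transversal_vertex_other_part[OF v] by (auto simp: mod_coloring_def)
  then have "util (transversal_edges r k) v ?c = (\<Prod>j\<in>{..<r} - {v div k}. card ({..<k} - {b - 1}))"
    unfolding util_transversal_edges[OF v] by (intro prod.cong) auto
  also have "card ({..<k} - {b - 1}) = k - 1" using b by (subst card_Diff_singleton) auto
  then have "(\<Prod>j\<in>{..<r} - {v div k}. card ({..<k} - {b - 1})) = (k - 1) ^ (r - 1)"
    using \<open>v div k < r\<close> by simp
  finally show ?thesis .
qed

lemma util_mod_coloring:
  assumes v: "v < r * k" and "k \<ge> 1"
  shows "util (transversal_edges r k) v (mod_coloring {..<r * k} k) = (k - 1) ^ (r - 1)"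
proof -
  have "mod_coloring {..<r * k} k v \<in> {1..k}"
    using colorings_range[OF mod_coloring_in_colorings[OF \<open>k \<ge> 1\<close>], of "{v}"] v by auto
  from util_mod_coloring_fun_upd[OF v this] show ?thesis by (simp only: fun_upd_triv)
qed

lemma mod_coloring_nash_eq:
  assumes "k \<ge> 1"
  shows "nash_eq {..<r * k} (transversal_edges r k) k (mod_coloring {..<r * k} k)"
  unfolding nash_eq_def
proof (intro conjI ballI)
  show "mod_coloring {..<r * k} k \<in> colorings {..<r * k} k"
    using assms by (rule mod_coloring_in_colorings)
  fix v b assume v: "v \<in> {..<r * k}" and "b \<in> {1..k}"
  then show "util (transversal_edges r k) v ((mod_coloring {..<r * k} k)(v := b))
      \<le> util (transversal_edges r k) v (mod_coloring {..<r * k} k)"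
    using util_mod_coloring_fun_upd util_mod_coloring assms by simp
qed

lemma SW_mod_coloring:
  assumes "k \<ge> 1"
  shows "SW {..<r * k} (transversal_edges r k) (mod_coloring {..<r * k} k) = r * k * (k - 1) ^ (r - 1)"
proof -
  have "util (transversal_edges r k) v (mod_coloring {..<r * k} k) = (k - 1) ^ (r - 1)"
    if "v \<in> {..<r * k}" for v
    using util_mod_coloring that assms by simp
  then show ?thesis unfolding SW_def by simp
qed

lemma util_part_coloring:
  assumes v: "v < r * k" and small: "v div k + 1 < k \<or> r \<le> k"
  shows "util (transversal_edges r k) v (part_coloring r k) = k ^ (r - 1)"
proof -
  have "v div k < r" using v by (simp add: less_mult_imp_div_less)
  have "{b \<in> {..<k}. part_coloring r k (j * k + b) \<noteq> part_coloring r k v} = {..<k}"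
    if "j \<in> {..<r} - {v div k}" for j
    using that small \<open>v div k < r\<close> v transversal_vertex_other_part[OF v]
    by (auto simp: part_coloring_def)
  then have "util (transversal_edges r k) v (part_coloring r k) = (\<Prod>j\<in>{..<r} - {v div k}. card {..<k})"
    unfolding util_transversal_edges[OF v] by (intro prod.cong) auto
  also have "\<dots> = k ^ (r - 1)" using \<open>v div k < r\<close> by simp
  finally show ?thesis .
qed

lemma SW_part_coloring_ge:
  assumes "r \<ge> 1"
  shows "max_unique r k * k ^ r \<le> SW {..<r * k} (transversal_edges r k) (part_coloring r k)"
proof -
  define g where "g = max_unique r k"
  have "g \<le> r" unfolding g_def max_unique_def by auto
  then have gk: "g * k \<le> r * k" by (rule mult_right_mono) simp
  have "util (transversal_edges r k) v (part_coloring r k) = k ^ (r - 1)" if "v \<in> {..<g * k}" for v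
  proof (rule util_part_coloring)
    show "v < r * k" using gk that by (meson lessThan_iff less_le_trans)
    have "v div k < g" using that by (simp add: less_mult_imp_div_less)
    then show "v div k + 1 < k \<or> r \<le> k" unfolding g_def max_unique_def by (auto split: if_splits)
  qed
  then have "(\<Sum>v\<in>{..<g * k}. util (transversal_edges r k) v (part_coloring r k)) = g * k ^ r"
    using assms by (cases r) auto
  moreover have "(\<Sum>v\<in>{..<g * k}. util (transversal_edges r k) v (part_coloring r k))
      \<le> SW {..<r * k} (transversal_edges r k) (part_coloring r k)"
    unfolding SW_def using gk by (intro sum_mono2) auto
  ultimately show ?thesis unfolding g_def by simp
qed

section \<open>The lower bounds\<close>

lemma PoA_ge:
  assumes "r \<ge> 1" "k \<ge> 2"
  shows "ereal (real (max_unique r k) / real r * (real k / (real k - 1)) ^ (r - 1)) \<le> PoA r k"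
proof -
  let ?V = "{..<r * k}" and ?E = "transversal_edges r k"
  have UH: "(?V, ?E) \<in> uniform_hypergraphs r" using transversal_edges_uniform assms by simp
  have "ereal (real (SW ?V ?E (part_coloring r k)) / real (SW ?V ?E (mod_coloring ?V k))) \<le> ratio ?V ?E k"
    using assms by (intro ratio_ge mod_coloring_nash_eq part_coloring_in_colorings) auto
  also have "\<dots> \<le> PoA r k" by (rule ratio_le_PoA[OF UH])
  finally have ratio: "ereal (real (SW ?V ?E (part_coloring r k)) / real (SW ?V ?E (mod_coloring ?V k)))
      \<le> PoA r k" .
  have "real (max_unique r k) * real k ^ r \<le> real (SW ?V ?E (part_coloring r k))"
    using SW_part_coloring_ge[OF \<open>r \<ge> 1\<close>, of k] by (metis of_nat_le_iff of_nat_mult of_nat_power)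
  moreover have "real (SW ?V ?E (mod_coloring ?V k)) = real r * real k * (real k - 1) ^ (r - 1)"
    using SW_mod_coloring[of k r] assms by (simp add: of_nat_diff)
  moreover have "real k ^ r = real k * real k ^ (r - 1)"
    using \<open>r \<ge> 1\<close> by (simp flip: power_Suc)
  ultimately have "real (max_unique r k) / real r * (real k / (real k - 1)) ^ (r - 1)
      \<le> real (SW ?V ?E (part_coloring r k)) / real (SW ?V ?E (mod_coloring ?V k))"
    using assms by (simp add: power_divide field_simps)
  with ratio show ?thesis by (meson ereal_less_eq(3) order_trans)
qed

lemma mod_coloring_color_repeated:
  assumes "2 * k \<le> r" "b \<in> {1..k}"
  shows "b \<in> mod_coloring {..<r} k ` ({..<r} - {v})"
proof -
  obtain a where a: "b = Suc a" "a < k" using assms(2) by (cases b) auto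
  then have "mod_coloring {..<r} k a = b" "mod_coloring {..<r} k (a + k) = b"
    using assms(1) by (auto simp: mod_coloring_def)
  moreover have "a \<in> {..<r} - {v} \<or> a + k \<in> {..<r} - {v}" using a assms(1) by auto
  ultimately show ?thesis by (metis image_eqI)
qed

lemma PoA_infinite:
  assumes "k \<ge> 2" "2 * k \<le> r"
  shows "PoA r k = \<infinity>"
proof -
  let ?V = "{..<r}" and ?E = "{{..<r}}"
  let ?c = "mod_coloring ?V k"
  have UH: "(?V, ?E) \<in> uniform_hypergraphs r"
    using assms unfolding uniform_hypergraphs_def hypergraph_def by (auto simp: lessThan_empty_iff)
  have deviation: "util ?E v (?c(v := b)) = 0" if "b \<in> {1..k}" for v b
    using util_fun_upd[of ?E v ?c b] mod_coloring_color_repeated[OF assms(2) that] by simp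
  have c: "?c \<in> colorings ?V k" using assms by (intro mod_coloring_in_colorings) simp
  then have "util ?E v ?c = 0" if "v \<in> ?V" for v
    using deviation[of "?c v" v] colorings_range[OF c, of "{v}"] that by simp
  then have "SW ?V ?E ?c = 0" unfolding SW_def by simp
  moreover have "nash_eq ?V ?E k ?c" unfolding nash_eq_def using c deviation by simp
  ultimately have "NEW ?V ?E k = 0"
    using NEW_le_SW[of ?V ?E k ?c] NEW_nonneg[of ?V ?E k] by (simp add: zero_ereal_def)
  define c' :: "nat \<Rightarrow> nat" where "c' = restrict (\<lambda>v. if v = 0 then 1 else 2) ?V"
  have c': "c' \<in> colorings ?V k" using assms unfolding c'_def colorings_def by auto
  have "c' 0 \<notin> c' ` (?V - {0})" unfolding c'_def by auto
  then have "{e \<in> ?E. 0 \<in> e \<and> c' 0 \<notin> c' ` (e - {0})} = ?E" using assms by auto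
  then have "util ?E 0 c' = 1" using util_eq_card_unique[of ?E 0 c'] by simp
  moreover have "util ?E 0 c' \<le> SW ?V ?E c'"
    unfolding SW_def using assms by (intro member_le_sum) auto
  ultimately have "0 < SW ?V ?E c'" by simp
  then have "0 < OPT ?V ?E k" using SW_le_OPT[OF _ c'] by (meson finite_lessThan less_le_trans)
  with \<open>NEW ?V ?E k = 0\<close> have "ratio ?V ?E k = \<infinity>" unfolding ratio_def by simp
  then show ?thesis using ratio_le_PoA[OF UH, of k] by simp
qed

theorem theorem2:
  fixes r k :: nat
  assumes "r \<ge> 2" and "k \<ge> 2"
  shows "(k \<ge> r \<longrightarrow>
            ereal ((real k / (real k - 1)) ^ (r - 1)) \<le> PoA r k \<and>
            PoA r k \<le> ereal ((2 * real k + real r - 2) / (2 * real k - real r)))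
       \<and> (real r / 2 < real k \<and> k < r \<longrightarrow>
            ereal ((real k - 1) / real r * (real k / (real k - 1)) ^ (r - 1)) \<le> PoA r k \<and>
            PoA r k \<le> ereal ((real k - 1) / real r * ((2 * real k + real r - 2) / (2 * real k - real r))))
       \<and> (real k \<le> real r / 2 \<longrightarrow> PoA r k = \<infinity>)"
proof (intro conjI impI)
  have r: "r \<ge> 1" and k: "k \<ge> 1" using assms by simp_all
  show "ereal ((real k / (real k - 1)) ^ (r - 1)) \<le> PoA r k"
    and "PoA r k \<le> ereal ((2 * real k + real r - 2) / (2 * real k - real r))" if "k \<ge> r"
    using PoA_ge[OF r \<open>k \<ge> 2\<close>] PoA_le[OF r k] that assms by (simp_all add: max_unique_def)
  show "ereal ((real k - 1) / real r * (real k / (real k - 1)) ^ (r - 1)) \<le> PoA r k"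
    and "PoA r k \<le> ereal ((real k - 1) / real r * ((2 * real k + real r - 2) / (2 * real k - real r)))"
    if "real r / 2 < real k \<and> k < r"
    using PoA_ge[OF r \<open>k \<ge> 2\<close>] PoA_le[OF r k] that assms by (simp_all add: max_unique_def of_nat_diff)
  show "PoA r k = \<infinity>" if "real k \<le> real r / 2"
    using PoA_infinite[OF \<open>k \<ge> 2\<close>] that by simp
qed

end
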